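(* Let $(X_n)_{n\ge0}$ be a Markov chain on a measurable space $E$ with Markov transitions $M(x,dy)$, starting at $X_0=x$, and let $H$ be a positive measurable function on $E$. Assume there exist a positive measurable function $h$ on $E$ (with $0<M(1/h)<\infty$) and parameters $\epsilon_h\in]0,1[$, $\kappa_h\in]0,\infty[$ such that for all $x,y\in E$, $$H^h(x):=H(x)\,h(x)\,M(1/h)(x)\le1-\epsilon_h\quad\text{and}\quad M(1/h)(x)\le\kappa_h\,M(1/h)(y).$$ Let $X^{1/h}_n$ be the Markov chain with transitions $M^{1/h}(x,dy):=M(x,dy)\frac{h^{-1}(y)}{M(h^{-1})(x)}$. Then for any $n\ge1$ and any bounded measurable $F$ on $E^n$, $$\mathbb E\Big(F(X_1,\dots,X_n)\prod_{1\le k\le n}H(X_k)\,\Big|\,X_0=x\Big)=\mathbb E\Big(F(X^{1/h}_1,\dots,X^{1/h}_n)\frac{M(h^{-1})(X^{1/h}_0)}{M(h^{-1})(X^{1/h}_n)}\prod_{1\le k\le n}H^h(X^{1/h}_k)\,\Big|\,X^{1/h}_0=x\Big).$$ Moreover, $$\sup_x\mathbb E\Big(\prod_{1\le k\le n}H(X_k)\,\Big|\,X_0=x\Big)\le\kappa_h(1-\epsilon_h)^n.$$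
   Context: $M(f)(x):=\int M(x,dy)f(y)$ and $h^{-1}:=1/h$. *)

theory Defs
  imports "HOL-Probability.Probability"
begin

definition kapply :: "('a \<Rightarrow> 'a measure) \<Rightarrow> ('a \<Rightarrow> real) \<Rightarrow> 'a \<Rightarrow> real" where
  "kapply M f x = (\<integral>y. f y \<partial>M x)"

definition twisted_kernel :: "('a \<Rightarrow> 'a measure) \<Rightarrow> ('a \<Rightarrow> real) \<Rightarrow> 'a \<Rightarrow> 'a measure" where
  "twisted_kernel M h x = density (M x) (\<lambda>y. ennreal ((1 / h y) / kapply M (\<lambda>z. 1 / h z) x))"

text \<open>Law of the path (X_0,...,X_n) of the Markov chain with kernel K on E started at X_0 = x,
  as a measure on the extensional functions {0..n} -> E.\<close>
fun chain_path :: "'a measure \<Rightarrow> ('a \<Rightarrow> 'a measure) \<Rightarrow> nat \<Rightarrow> 'a \<Rightarrow> (nat \<Rightarrow> 'a) measure" where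
  "chain_path E K 0 x = return (PiM {0} (\<lambda>_. E)) (\<lambda>i. if i = 0 then x else undefined)"
| "chain_path E K (Suc n) x =
     chain_path E K n x \<bind> (\<lambda>\<omega>. K (\<omega> n) \<bind>
        (\<lambda>y. return (PiM {0..Suc n} (\<lambda>_. E)) (fun_upd \<omega> (Suc n) y)))"

end

theory Submission
  imports Defs
begin

(* Let D_n(w) be the product over 1 <= k <= n of h^-1(w_k) / M(h^-1)(w_(k-1)).  One step of the
   twisted chain from y has density h^-1 / M(h^-1)(y) with respect to M(y, -); by induction along
   the recursive construction of the path law, the law of the twisted path (X_0, ..., X_n) has
   density D_n with respect to the law of the original path.  Multiplied by D_n, the weight
   M(h^-1)(w_0) / M(h^-1)(w_n) * prod_k H^h(w_k) telescopes to prod_k H(w_k), which is the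
   identity.  For F = 1 the twisted integrand is bounded by kappa_h (1 - eps_h)^n pointwise, and
   the twisted path law is a probability measure, which gives the bound. *)

lemma measurable_fun_upd_Suc[measurable]:
  "(\<lambda>(\<omega>, y). fun_upd \<omega> (Suc n) y) \<in> (PiM {0..n} (\<lambda>_. E) \<Otimes>\<^sub>M E) \<rightarrow>\<^sub>M PiM {0..Suc n} (\<lambda>_. E)"
  using measurable_add_dim[of "Suc n" "{0..n}" "\<lambda>_. E"] by (simp add: atLeast0_atMost_Suc)

lemma measurable_chain_step:
  assumes "K \<in> E \<rightarrow>\<^sub>M prob_algebra E"
  shows "(\<lambda>\<omega>. K (\<omega> n) \<bind> (\<lambda>y. return (PiM {0..Suc n} (\<lambda>_. E)) (fun_upd \<omega> (Suc n) y)))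
     \<in> PiM {0..n} (\<lambda>_. E) \<rightarrow>\<^sub>M prob_algebra (PiM {0..Suc n} (\<lambda>_. E))"
proof (rule measurable_bind_prob_space2)
  show "(\<lambda>\<omega>. K (\<omega> n)) \<in> PiM {0..n} (\<lambda>_. E) \<rightarrow>\<^sub>M prob_algebra E"
    using assms by measurable
  show "(\<lambda>(\<omega>, y). return (PiM {0..Suc n} (\<lambda>_. E)) (fun_upd \<omega> (Suc n) y))
      \<in> (PiM {0..n} (\<lambda>_. E) \<Otimes>\<^sub>M E) \<rightarrow>\<^sub>M prob_algebra (PiM {0..Suc n} (\<lambda>_. E))"
    using measurable_compose[OF measurable_fun_upd_Suc measurable_return_prob_space]
    by (simp add: case_prod_beta')
qed

lemma chain_path_prob_algebra:
  assumes K: "K \<in> E \<rightarrow>\<^sub>M prob_algebra E" and x: "x \<in> space E"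
  shows "chain_path E K n x \<in> space (prob_algebra (PiM {0..n} (\<lambda>_. E)))"
proof (induction n)
  case 0
  have "(\<lambda>i. if i = 0 then x else undefined) \<in> space (PiM {0} (\<lambda>_. E))"
    using x by (auto simp: space_PiM PiE_def extensional_def)
  then show ?case by (auto simp: space_prob_algebra intro: prob_space_return)
next
  case (Suc n)
  show ?case
    using measurable_space[OF measurable_bind_prob_space[OF measurable_const[OF Suc]
          measurable_chain_step[OF K]], of undefined "count_space UNIV"] by simp
qed

lemma
  assumes "K \<in> E \<rightarrow>\<^sub>M prob_algebra E" and "x \<in> space E"
  shows sets_chain_path: "sets (chain_path E K n x) = sets (PiM {0..n} (\<lambda>_. E))"
    and space_chain_path: "space (chain_path E K n x) = space (PiM {0..n} (\<lambda>_. E))"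
    and prob_space_chain_path: "prob_space (chain_path E K n x)"
  using chain_path_prob_algebra[OF assms, of n] sets_eq_imp_space_eq
  by (auto simp: space_prob_algebra)

lemma nn_integral_chain_path_Suc:
  assumes K: "K \<in> E \<rightarrow>\<^sub>M prob_algebra E" and x: "x \<in> space E"
    and G: "G \<in> borel_measurable (PiM {0..Suc n} (\<lambda>_. E))"
  shows "(\<integral>\<^sup>+\<omega>. G \<omega> \<partial>chain_path E K (Suc n) x)
     = (\<integral>\<^sup>+\<omega>. (\<integral>\<^sup>+y. G (fun_upd \<omega> (Suc n) y) \<partial>K (\<omega> n)) \<partial>chain_path E K n x)"
proof -
  have "(\<integral>\<^sup>+\<omega>. G \<omega> \<partial>chain_path E K (Suc n) x)
      = (\<integral>\<^sup>+\<omega>. (\<integral>\<^sup>+z. G z \<partial>(K (\<omega> n) \<bind> (\<lambda>y. return (PiM {0..Suc n} (\<lambda>_. E)) (fun_upd \<omega> (Suc n) y))))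
           \<partial>chain_path E K n x)"
    unfolding chain_path.simps
    using measurable_prob_algebraD[OF measurable_chain_step[OF K]] sets_chain_path[OF K x, of n]
    by (intro nn_integral_bind[OF G]) (simp cong: measurable_cong_sets)
  also have "\<dots> = (\<integral>\<^sup>+\<omega>. (\<integral>\<^sup>+y. G (fun_upd \<omega> (Suc n) y) \<partial>K (\<omega> n)) \<partial>chain_path E K n x)"
  proof (rule nn_integral_cong)
    fix \<omega> assume "\<omega> \<in> space (chain_path E K n x)"
    then have \<omega>: "\<omega> \<in> space (PiM {0..n} (\<lambda>_. E))"
      using space_chain_path[OF K x] by simp
    then have "K (\<omega> n) \<in> space (prob_algebra E)"
      using measurable_space[OF K] by (auto simp: space_PiM PiE_iff)
    then have "space (K (\<omega> n)) \<noteq> {}" and sets_K: "sets (K (\<omega> n)) = sets E"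
      by (auto simp: space_prob_algebra prob_space.not_empty)
    moreover have upd: "fun_upd \<omega> (Suc n) \<in> E \<rightarrow>\<^sub>M PiM {0..Suc n} (\<lambda>_. E)"
      using measurable_component_update[OF \<omega>, of "Suc n"] by (simp add: atLeast0_atMost_Suc)
    ultimately have "K (\<omega> n) \<bind> (\<lambda>y. return (PiM {0..Suc n} (\<lambda>_. E)) (fun_upd \<omega> (Suc n) y))
        = distr (K (\<omega> n)) (PiM {0..Suc n} (\<lambda>_. E)) (fun_upd \<omega> (Suc n))"
      by (intro bind_return_distr') (simp_all cong: measurable_cong_sets)
    then show "(\<integral>\<^sup>+z. G z \<partial>(K (\<omega> n) \<bind> (\<lambda>y. return (PiM {0..Suc n} (\<lambda>_. E)) (fun_upd \<omega> (Suc n) y))))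
        = (\<integral>\<^sup>+y. G (fun_upd \<omega> (Suc n) y) \<partial>K (\<omega> n))"
      using upd sets_K G by (simp add: nn_integral_distr cong: measurable_cong_sets)
  qed
  finally show ?thesis .
qed

definition twisted_path_density :: "('a \<Rightarrow> 'a measure) \<Rightarrow> ('a \<Rightarrow> real) \<Rightarrow> nat \<Rightarrow> (nat \<Rightarrow> 'a) \<Rightarrow> real" where
  "twisted_path_density M h n \<omega> = (\<Prod>k\<in>{1..n}. 1 / h (\<omega> k) / kapply M (\<lambda>z. 1 / h z) (\<omega> (k - 1)))"

lemma twisted_path_density_fun_upd_Suc:
  "twisted_path_density M h (Suc n) (fun_upd \<omega> (Suc n) y)
     = twisted_path_density M h n \<omega> * (1 / h y / kapply M (\<lambda>z. 1 / h z) (\<omega> n))"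
proof -
  have "(\<Prod>k\<in>{1..n}. 1 / h (fun_upd \<omega> (Suc n) y k) / kapply M (\<lambda>z. 1 / h z) (fun_upd \<omega> (Suc n) y (k - 1)))
      = twisted_path_density M h n \<omega>"
    unfolding twisted_path_density_def by (rule prod.cong) auto
  then show ?thesis
    by (simp add: twisted_path_density_def prod.cl_ivl_Suc)
qed

locale twisting_function =
  fixes E :: "'a measure" and M :: "'a \<Rightarrow> 'a measure" and h :: "'a \<Rightarrow> real"
  assumes kernel: "M \<in> E \<rightarrow>\<^sub>M prob_algebra E"
    and measurable_h[measurable]: "h \<in> borel_measurable E"
    and h_pos: "y \<in> space E \<Longrightarrow> 0 < h y"
    and Mh_pos: "y \<in> space E \<Longrightarrow> 0 < kapply M (\<lambda>z. 1 / h z) y"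
begin

abbreviation Mh :: "'a \<Rightarrow> real" where "Mh \<equiv> kapply M (\<lambda>z. 1 / h z)"

lemma measurable_kernel[measurable]: "M \<in> E \<rightarrow>\<^sub>M subprob_algebra E"
  using kernel by (rule measurable_prob_algebraD)

lemma
  assumes "y \<in> space E"
  shows space_kernel: "space (M y) = space E" and sets_kernel: "sets (M y) = sets E"
  using subprob_measurableD[OF measurable_kernel assms] by simp_all

lemma measurable_Mh[measurable]: "Mh \<in> borel_measurable E"
  unfolding kapply_def by measurable

lemma nn_integral_inverse_h:
  assumes y: "y \<in> space E"
  shows "(\<integral>\<^sup>+z. ennreal (1 / h z) \<partial>M y) = ennreal (Mh y)"
proof -
  (* Non-integrable functions have Bochner integral 0, so Mh y > 0 forces integrability. *)
  have "integrable (M y) (\<lambda>z. 1 / h z)"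
    using Mh_pos[OF y] not_integrable_integral_eq unfolding kapply_def by fastforce
  then show ?thesis
    unfolding kapply_def
    by (rule nn_integral_eq_integral) (auto intro!: AE_I2 less_imp_le h_pos simp: space_kernel[OF y])
qed

lemma nn_integral_twisted_kernel:
  assumes "y \<in> space E" and "G \<in> borel_measurable E"
  shows "(\<integral>\<^sup>+z. G z \<partial>twisted_kernel M h y) = (\<integral>\<^sup>+z. ennreal (1 / h z / Mh y) * G z \<partial>M y)"
  unfolding twisted_kernel_def using assms
  by (intro nn_integral_density) (simp_all add: sets_kernel cong: measurable_cong_sets)

lemma prob_space_twisted_kernel:
  assumes y: "y \<in> space E"
  shows "prob_space (twisted_kernel M h y)"
proof (rule prob_spaceI)
  have "emeasure (twisted_kernel M h y) (space (twisted_kernel M h y))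
      = (\<integral>\<^sup>+z. ennreal (1 / h z / Mh y) \<partial>M y)"
    using nn_integral_twisted_kernel[OF y, of "\<lambda>_. 1"] by simp
  also have "\<dots> = (\<integral>\<^sup>+z. ennreal (1 / h z) * ennreal (1 / Mh y) \<partial>M y)"
    using h_pos Mh_pos[OF y]
    by (intro nn_integral_cong) (simp add: space_kernel[OF y] ennreal_mult[symmetric] less_imp_le)
  also have "\<dots> = ennreal (Mh y) * ennreal (1 / Mh y)"
    by (simp add: nn_integral_multc sets_kernel[OF y] nn_integral_inverse_h[OF y] cong: measurable_cong_sets)
  also have "\<dots> = 1"
    using Mh_pos[OF y] by (simp add: ennreal_mult[symmetric] less_imp_le)
  finally show "emeasure (twisted_kernel M h y) (space (twisted_kernel M h y)) = 1" .
qed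

lemma measurable_twisted_kernel: "twisted_kernel M h \<in> E \<rightarrow>\<^sub>M prob_algebra E"
proof (intro measurable_prob_algebraI measurable_subprob_algebra)
  fix y assume y: "y \<in> space E"
  show "prob_space (twisted_kernel M h y)" "subprob_space (twisted_kernel M h y)"
    using prob_space_twisted_kernel[OF y] by (simp_all add: prob_space_imp_subprob_space)
  show "sets (twisted_kernel M h y) = sets E"
    unfolding twisted_kernel_def using sets_kernel[OF y] by simp
next
  fix A assume A[measurable]: "A \<in> sets E"
  have "(\<lambda>y. \<integral>\<^sup>+z. ennreal (1 / h z / Mh y) * indicator A z \<partial>M y) \<in> borel_measurable E"
    by (rule nn_integral_measurable_subprob_algebra2) measurable
  moreover have "emeasure (twisted_kernel M h y) A = (\<integral>\<^sup>+z. ennreal (1 / h z / Mh y) * indicator A z \<partial>M y)"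
    if y: "y \<in> space E" for y
    using nn_integral_twisted_kernel[OF y, of "indicator A"] A
    by (simp add: twisted_kernel_def sets_kernel[OF y] nn_integral_indicator)
  ultimately show "(\<lambda>y. emeasure (twisted_kernel M h y) A) \<in> borel_measurable E"
    by (simp cong: measurable_cong)
qed

lemma measurable_twisted_path_density[measurable]:
  "twisted_path_density M h n \<in> borel_measurable (PiM {0..n} (\<lambda>_. E))"
  unfolding twisted_path_density_def by measurable auto

lemma twisted_path_density_nonneg:
  assumes "\<omega> \<in> space (PiM {0..n} (\<lambda>_. E))"
  shows "0 \<le> twisted_path_density M h n \<omega>"
  unfolding twisted_path_density_def
  using assms h_pos Mh_pos by (intro prod_nonneg) (auto simp: space_PiM PiE_iff less_imp_le)

lemma nn_integral_twisted_chain_path: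
  assumes x: "x \<in> space E" and "G \<in> borel_measurable (PiM {0..n} (\<lambda>_. E))"
  shows "(\<integral>\<^sup>+\<omega>. G \<omega> \<partial>chain_path E (twisted_kernel M h) n x)
       = (\<integral>\<^sup>+\<omega>. ennreal (twisted_path_density M h n \<omega>) * G \<omega> \<partial>chain_path E M n x)"
  using assms(2)
proof (induction n arbitrary: G)
  case 0
  then show ?case by (simp add: twisted_path_density_def)
next
  case (Suc n)
  let ?D = "twisted_path_density M h" and ?K = "twisted_kernel M h"
  note Suc.prems[measurable]
  define \<Phi> where "\<Phi> \<omega> = (\<integral>\<^sup>+y. ennreal (1 / h y / Mh (\<omega> n)) * G (fun_upd \<omega> (Suc n) y) \<partial>M (\<omega> n))" for \<omega>
  have "\<Phi> \<in> borel_measurable (PiM {0..n} (\<lambda>_. E))"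
    unfolding \<Phi>_def by (rule nn_integral_measurable_subprob_algebra2) measurable
  have "(\<integral>\<^sup>+\<omega>. G \<omega> \<partial>chain_path E ?K (Suc n) x)
      = (\<integral>\<^sup>+\<omega>. (\<integral>\<^sup>+y. G (fun_upd \<omega> (Suc n) y) \<partial>?K (\<omega> n)) \<partial>chain_path E ?K n x)"
    by (rule nn_integral_chain_path_Suc[OF measurable_twisted_kernel x Suc.prems])
  also have "\<dots> = (\<integral>\<^sup>+\<omega>. \<Phi> \<omega> \<partial>chain_path E ?K n x)"
    unfolding \<Phi>_def
    by (intro nn_integral_cong nn_integral_twisted_kernel)
       (auto simp: space_chain_path[OF measurable_twisted_kernel x] space_PiM PiE_iff)
  also have "\<dots> = (\<integral>\<^sup>+\<omega>. ennreal (?D n \<omega>) * \<Phi> \<omega> \<partial>chain_path E M n x)"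
    by (rule Suc.IH) fact
  also have "\<dots> = (\<integral>\<^sup>+\<omega>. (\<integral>\<^sup>+y. ennreal (?D (Suc n) (fun_upd \<omega> (Suc n) y)) * G (fun_upd \<omega> (Suc n) y)
                       \<partial>M (\<omega> n)) \<partial>chain_path E M n x)"
  proof (rule nn_integral_cong)
    fix \<omega> assume "\<omega> \<in> space (chain_path E M n x)"
    then have \<omega>: "\<omega> \<in> space (PiM {0..n} (\<lambda>_. E))" and \<omega>n: "\<omega> n \<in> space E"
      by (auto simp: space_chain_path[OF kernel x] space_PiM PiE_iff)
    have "ennreal (?D n \<omega>) * \<Phi> \<omega>
        = (\<integral>\<^sup>+y. ennreal (?D n \<omega>) * (ennreal (1 / h y / Mh (\<omega> n)) * G (fun_upd \<omega> (Suc n) y)) \<partial>M (\<omega> n))"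
      unfolding \<Phi>_def using \<omega>
      by (intro nn_integral_cmult[symmetric]) (simp add: sets_kernel[OF \<omega>n] cong: measurable_cong_sets)
    also have "\<dots> = (\<integral>\<^sup>+y. ennreal (?D (Suc n) (fun_upd \<omega> (Suc n) y)) * G (fun_upd \<omega> (Suc n) y) \<partial>M (\<omega> n))"
      using twisted_path_density_nonneg[OF \<omega>]
      by (intro nn_integral_cong)
         (simp add: twisted_path_density_fun_upd_Suc ennreal_mult'[symmetric] mult.assoc[symmetric])
    finally show "ennreal (?D n \<omega>) * \<Phi> \<omega> = \<dots>" .
  qed
  also have "\<dots> = (\<integral>\<^sup>+\<omega>. ennreal (?D (Suc n) \<omega>) * G \<omega> \<partial>chain_path E M (Suc n) x)"
    by (intro nn_integral_chain_path_Suc[OF kernel x, symmetric]) measurable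
  finally show ?case .
qed

lemma twisted_chain_path_eq_density:
  assumes x: "x \<in> space E"
  shows "chain_path E (twisted_kernel M h) n x
       = density (chain_path E M n x) (\<lambda>\<omega>. ennreal (twisted_path_density M h n \<omega>))"
proof (rule measure_eqI)
  note sets_eq = sets_chain_path[OF kernel x] sets_chain_path[OF measurable_twisted_kernel x]
  show "sets (chain_path E (twisted_kernel M h) n x)
      = sets (density (chain_path E M n x) (\<lambda>\<omega>. ennreal (twisted_path_density M h n \<omega>)))"
    by (simp add: sets_eq)
  fix A assume "A \<in> sets (chain_path E (twisted_kernel M h) n x)"
  then have A: "A \<in> sets (PiM {0..n} (\<lambda>_. E))" by (simp add: sets_eq)
  show "emeasure (chain_path E (twisted_kernel M h) n x) A
      = emeasure (density (chain_path E M n x) (\<lambda>\<omega>. ennreal (twisted_path_density M h n \<omega>))) A"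
    using nn_integral_twisted_chain_path[OF x borel_measurable_indicator[OF A]] A
    by (simp add: emeasure_density sets_eq nn_integral_indicator cong: measurable_cong_sets)
qed

lemma twisted_path_density_telescope:
  assumes \<omega>: "\<omega> \<in> space (PiM {0..n} (\<lambda>_. E))"
  shows "twisted_path_density M h n \<omega> * (\<Prod>k\<in>{1..n}. h (\<omega> k) * Mh (\<omega> k)) = Mh (\<omega> n) / Mh (\<omega> 0)"
proof -
  have pos: "0 < h (\<omega> k)" "0 < Mh (\<omega> k)" if "k \<le> n" for k
    using \<omega> that h_pos Mh_pos by (auto simp: space_PiM PiE_iff)
  have "twisted_path_density M h n \<omega> * (\<Prod>k\<in>{1..n}. h (\<omega> k) * Mh (\<omega> k))
      = (\<Prod>k\<in>{Suc 0..n}. Mh (\<omega> k) / Mh (\<omega> (k - 1)))"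
    unfolding twisted_path_density_def prod.distrib[symmetric]
    using pos by (intro prod.cong) (auto simp: field_simps less_imp_neq[symmetric])
  also have "\<dots> = Mh (\<omega> n) / Mh (\<omega> 0)"
    by (intro prod_telescope'') (force dest: pos(2))+
  finally show ?thesis .
qed

lemma integral_chain_path_eq_twisted:
  assumes x: "x \<in> space E"
    and [measurable]: "H \<in> borel_measurable E" "G \<in> borel_measurable (PiM {0..n} (\<lambda>_. E))"
  shows "(\<integral>\<omega>. G \<omega> * (\<Prod>k\<in>{1..n}. H (\<omega> k)) \<partial>chain_path E M n x)
       = (\<integral>\<omega>. G \<omega> * (Mh (\<omega> 0) / Mh (\<omega> n)) * (\<Prod>k\<in>{1..n}. H (\<omega> k) * h (\<omega> k) * Mh (\<omega> k))
           \<partial>chain_path E (twisted_kernel M h) n x)"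
proof -
  let ?D = "twisted_path_density M h n"
  note sets_eq = sets_chain_path[OF kernel x] and space_eq = space_chain_path[OF kernel x]
  have "(\<integral>\<omega>. G \<omega> * (Mh (\<omega> 0) / Mh (\<omega> n)) * (\<Prod>k\<in>{1..n}. H (\<omega> k) * h (\<omega> k) * Mh (\<omega> k))
           \<partial>chain_path E (twisted_kernel M h) n x)
      = (\<integral>\<omega>. ?D \<omega> * (G \<omega> * (Mh (\<omega> 0) / Mh (\<omega> n)) * (\<Prod>k\<in>{1..n}. H (\<omega> k) * h (\<omega> k) * Mh (\<omega> k)))
           \<partial>chain_path E M n x)"
    unfolding twisted_chain_path_eq_density[OF x]
    by (subst integral_density)
       (auto intro!: AE_I2 twisted_path_density_nonneg simp: sets_eq space_eq cong: measurable_cong_sets)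
  also have "\<dots> = (\<integral>\<omega>. G \<omega> * (\<Prod>k\<in>{1..n}. H (\<omega> k)) \<partial>chain_path E M n x)"
  proof (rule Bochner_Integration.integral_cong[OF refl])
    fix \<omega> assume "\<omega> \<in> space (chain_path E M n x)"
    then have \<omega>: "\<omega> \<in> space (PiM {0..n} (\<lambda>_. E))" by (simp add: space_eq)
    then have "0 < Mh (\<omega> 0)" "0 < Mh (\<omega> n)"
      using Mh_pos by (auto simp: space_PiM PiE_iff)
    have "(\<Prod>k\<in>{1..n}. H (\<omega> k) * h (\<omega> k) * Mh (\<omega> k))
        = (\<Prod>k\<in>{1..n}. H (\<omega> k)) * (\<Prod>k\<in>{1..n}. h (\<omega> k) * Mh (\<omega> k))"
      by (simp add: prod.distrib mult.assoc)
    then have "?D \<omega> * (G \<omega> * (Mh (\<omega> 0) / Mh (\<omega> n)) * (\<Prod>k\<in>{1..n}. H (\<omega> k) * h (\<omega> k) * Mh (\<omega> k)))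
        = G \<omega> * (\<Prod>k\<in>{1..n}. H (\<omega> k)) * (Mh (\<omega> 0) / Mh (\<omega> n))
          * (?D \<omega> * (\<Prod>k\<in>{1..n}. h (\<omega> k) * Mh (\<omega> k)))"
      by (simp only: ac_simps)
    also have "\<dots> = G \<omega> * (\<Prod>k\<in>{1..n}. H (\<omega> k))"
      using twisted_path_density_telescope[OF \<omega>] \<open>0 < Mh (\<omega> 0)\<close> \<open>0 < Mh (\<omega> n)\<close> by simp
    finally show "?D \<omega> * (G \<omega> * (Mh (\<omega> 0) / Mh (\<omega> n)) * (\<Prod>k\<in>{1..n}. H (\<omega> k) * h (\<omega> k) * Mh (\<omega> k)))
        = G \<omega> * (\<Prod>k\<in>{1..n}. H (\<omega> k))" .
  qed
  finally show ?thesis ..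
qed

lemma integral_chain_path_prod_le:
  assumes y: "y \<in> space E" and [measurable]: "H \<in> borel_measurable E"
    and H_nonneg: "\<And>z. z \<in> space E \<Longrightarrow> 0 \<le> H z"
    and twisted_H_le: "\<And>z. z \<in> space E \<Longrightarrow> H z * h z * Mh z \<le> c"
    and Mh_ratio_le: "\<And>z w. z \<in> space E \<Longrightarrow> w \<in> space E \<Longrightarrow> Mh z \<le> kappa * Mh w"
  shows "(\<integral>\<omega>. (\<Prod>k\<in>{1..n}. H (\<omega> k)) \<partial>chain_path E M n y) \<le> kappa * c ^ n"
proof -
  let ?P = "chain_path E (twisted_kernel M h) n y"
  let ?g = "\<lambda>\<omega>. Mh (\<omega> 0) / Mh (\<omega> n) * (\<Prod>k\<in>{1..n}. H (\<omega> k) * h (\<omega> k) * Mh (\<omega> k))"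
  interpret P: prob_space ?P
    by (rule prob_space_chain_path[OF measurable_twisted_kernel y])
  have g_nonneg: "0 \<le> ?g \<omega>" and g_le: "?g \<omega> \<le> kappa * c ^ n" if "\<omega> \<in> space ?P" for \<omega>
  proof -
    have \<omega>: "\<omega> k \<in> space E" if "k \<le> n" for k
      using \<open>\<omega> \<in> space ?P\<close> that
      by (auto simp: space_chain_path[OF measurable_twisted_kernel y] space_PiM PiE_iff)
    have Mh0: "0 < Mh (\<omega> 0)" and Mhn: "0 < Mh (\<omega> n)"
      using Mh_pos \<omega> by auto
    have ratio: "Mh (\<omega> 0) / Mh (\<omega> n) \<le> kappa"
      using Mh_ratio_le[OF \<omega> \<omega>, of 0 n] Mhn by (simp add: divide_le_eq)
    have kappa_nonneg: "0 \<le> kappa"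
      using ratio divide_pos_pos[OF Mh0 Mhn] by linarith
    have factor_nonneg: "0 \<le> H (\<omega> k) * h (\<omega> k) * Mh (\<omega> k)" if "k \<in> {1..n}" for k
      using that \<omega> H_nonneg h_pos Mh_pos by (simp add: less_imp_le)
    then have prod_nonneg: "0 \<le> (\<Prod>k\<in>{1..n}. H (\<omega> k) * h (\<omega> k) * Mh (\<omega> k))"
      by (rule prod_nonneg)
    have "(\<Prod>k\<in>{1..n}. H (\<omega> k) * h (\<omega> k) * Mh (\<omega> k)) \<le> (\<Prod>k\<in>{1..n}. c)"
      using factor_nonneg \<omega> twisted_H_le by (intro prod_mono) auto
    then show "?g \<omega> \<le> kappa * c ^ n"
      using ratio kappa_nonneg prod_nonneg by (intro mult_mono) auto
    show "0 \<le> ?g \<omega>"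
      using Mh0 Mhn prod_nonneg by simp
  qed
  have "integrable ?P ?g"
  proof (rule P.integrable_const_bound[where B = "kappa * c ^ n"])
    show "AE \<omega> in ?P. norm (?g \<omega>) \<le> kappa * c ^ n"
      using g_nonneg g_le by (intro AE_I2) (simp only: real_norm_def abs_of_nonneg)
    show "?g \<in> borel_measurable ?P"
      by (simp add: sets_chain_path[OF measurable_twisted_kernel y] cong: measurable_cong_sets)
  qed
  then have "(\<integral>\<omega>. ?g \<omega> \<partial>?P) \<le> kappa * c ^ n"
    using g_le by (intro P.integral_le_const AE_I2)
  then show ?thesis
    using integral_chain_path_eq_twisted[OF y, of H "\<lambda>_. 1"] by simp
qed

end

theorem mainTheorem11:
  fixes E :: "'a measure" and M :: "'a \<Rightarrow> 'a measure"
    and H h :: "'a \<Rightarrow> real" and eps kappa :: real and n :: nat and x :: 'a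
    and F :: "(nat \<Rightarrow> 'a) \<Rightarrow> real"
  assumes M_kernel: "M \<in> E \<rightarrow>\<^sub>M prob_algebra E"
    and H_meas: "H \<in> borel_measurable E" and H_pos: "\<And>y. y \<in> space E \<Longrightarrow> H y > 0"
    and h_meas: "h \<in> borel_measurable E" and h_pos: "\<And>y. y \<in> space E \<Longrightarrow> h y > 0"
    and Mh_fin: "\<And>y. y \<in> space E \<Longrightarrow> (\<integral>\<^sup>+ z. ennreal (1 / h z) \<partial>M y) < \<infinity>"
    and Mh_pos: "\<And>y. y \<in> space E \<Longrightarrow> kapply M (\<lambda>z. 1 / h z) y > 0"
    and eps: "0 < eps" "eps < 1" and kappa: "0 < kappa"
    and Hh_bound: "\<And>y. y \<in> space E \<Longrightarrow> H y * h y * kapply M (\<lambda>z. 1 / h z) y \<le> 1 - eps"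
    and Mh_ratio: "\<And>y z. y \<in> space E \<Longrightarrow> z \<in> space E \<Longrightarrow>
        kapply M (\<lambda>w. 1 / h w) y \<le> kappa * kapply M (\<lambda>w. 1 / h w) z"
    and n: "n \<ge> 1" and x: "x \<in> space E"
    and F_meas: "F \<in> borel_measurable (PiM {1..n} (\<lambda>_. E))"
    and F_bdd: "\<exists>B. \<forall>\<omega>\<in>space (PiM {1..n} (\<lambda>_. E)). \<bar>F \<omega>\<bar> \<le> B"
  shows "(\<integral>\<omega>. F (restrict \<omega> {1..n}) * (\<Prod>k\<in>{1..n}. H (\<omega> k)) \<partial>chain_path E M n x)
       = (\<integral>\<omega>. F (restrict \<omega> {1..n})
              * (kapply M (\<lambda>z. 1 / h z) (\<omega> 0) / kapply M (\<lambda>z. 1 / h z) (\<omega> n))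
              * (\<Prod>k\<in>{1..n}. H (\<omega> k) * h (\<omega> k) * kapply M (\<lambda>z. 1 / h z) (\<omega> k))
           \<partial>chain_path E (twisted_kernel M h) n x)
     \<and> (\<forall>y\<in>space E. (\<integral>\<omega>. (\<Prod>k\<in>{1..n}. H (\<omega> k)) \<partial>chain_path E M n y) \<le> kappa * (1 - eps) ^ n)"
proof -
  interpret twisting_function E M h
    using M_kernel h_meas h_pos Mh_pos by unfold_locales
  have "(\<lambda>\<omega>. F (restrict \<omega> {1..n})) \<in> borel_measurable (PiM {0..n} (\<lambda>_. E))"
    using measurable_compose[OF measurable_restrict_subset F_meas] by auto
  from integral_chain_path_eq_twisted[OF x H_meas this]
    integral_chain_path_prod_le[OF _ H_meas less_imp_le[OF H_pos] Hh_bound Mh_ratio]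
  show ?thesis by blast
qed

end
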